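(* Let $n\ge2$ and let $Q=\begin{pmatrix} M & m\\ m^\top&\mu\end{pmatrix}\in\mathcal{S}^n$ with $M\in\mathcal{S}^{n-1}$, $m\in\mathbb{R}^{n-1}$, $\mu\in\mathbb{R}$, and define its lift $\widetilde Q=\begin{pmatrix} M&m&m\\ m^\top&\mu&\mu\\ m^\top&\mu&\mu\end{pmatrix}\in\mathcal{S}^{n+1}$. If $Q\in(\mathcal{S}^n_{\ge0}+\mathcal{N}^n)\setminus(\mathcal{S}^n_{\ge0}\cup\mathcal{N}^n)$, then $\widetilde Q\in(\mathcal{S}^{n+1}_{\ge0}+\mathcal{N}^{n+1})\setminus(\mathcal{S}^{n+1}_{\ge0}\cup\mathcal{N}^{n+1})$. If $Q\in\mathcal{COP}^n\setminus(\mathcal{S}^n_{\ge0}+\mathcal{N}^n)$, then $\widetilde Q\in\mathcal{COP}^{n+1}\setminus(\mathcal{S}^{n+1}_{\ge0}+\mathcal{N}^{n+1})$.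
   Context: $\mathcal{S}^n$: real symmetric $n\times n$ matrices; $\mathcal{S}^n_{\ge0}$: positive semidefinite ones; $\mathcal{N}^n$: symmetric $n\times n$ matrices with all entries nonnegative; $\mathcal{COP}^n=\{B\in\mathcal{S}^n: x^\top Bx\ge0\ \forall x\in\mathbb{R}^n_{\ge0}\}$. *)

theory Defs
  imports "HOL-Analysis.Analysis"
begin

text \<open>Matrices of size n are represented as functions nat => nat => real;
only the entries with indices below n matter (indices 0..n-1).\<close>

type_synonym mat = "nat \<Rightarrow> nat \<Rightarrow> real"

definition symm :: "nat \<Rightarrow> mat \<Rightarrow> bool" where
  "symm n A \<longleftrightarrow> (\<forall>i<n. \<forall>j<n. A i j = A j i)"

definition qform :: "nat \<Rightarrow> mat \<Rightarrow> (nat \<Rightarrow> real) \<Rightarrow> real" where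
  "qform n A x = (\<Sum>i<n. \<Sum>j<n. x i * A i j * x j)"

definition psd :: "nat \<Rightarrow> mat \<Rightarrow> bool" where
  "psd n A \<longleftrightarrow> symm n A \<and> (\<forall>x. qform n A x \<ge> 0)"

definition nonneg :: "nat \<Rightarrow> mat \<Rightarrow> bool" where
  "nonneg n A \<longleftrightarrow> symm n A \<and> (\<forall>i<n. \<forall>j<n. A i j \<ge> 0)"

definition spn :: "nat \<Rightarrow> mat \<Rightarrow> bool" where
  "spn n A \<longleftrightarrow> (\<exists>P N. psd n P \<and> nonneg n N \<and> (\<forall>i<n. \<forall>j<n. A i j = P i j + N i j))"

definition cop :: "nat \<Rightarrow> mat \<Rightarrow> bool" where
  "cop n A \<longleftrightarrow> symm n A \<and> (\<forall>x. (\<forall>i<n. x i \<ge> 0) \<longrightarrow> qform n A x \<ge> 0)"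

text \<open>Lift of an n x n matrix Q = [[M,m],[m^T,mu]] to the (n+1) x (n+1) matrix
  [[M,m,m],[m^T,mu,mu],[m^T,mu,mu]]: the new index n duplicates the last index n-1.\<close>
definition lift :: "nat \<Rightarrow> mat \<Rightarrow> mat" where
  "lift n Q = (\<lambda>i j. Q (min i (n - 1)) (min j (n - 1)))"

end

theory Submission
  imports Defs
begin

text \<open>The lift agrees with \<open>Q\<close> on the leading \<open>n \<times> n\<close> block, and its quadratic form at \<open>x\<close>
  equals that of \<open>Q\<close> at the vector obtained by adding up the last two coordinates of \<open>x\<close>,
  a map sending the nonnegative orthant into itself. Hence lifting preserves each of the four
  cones (positive semidefinite, nonnegative, their sum, copositive), and restriction to the
  leading block shows that it also reflects them.\<close>

lemma qform_cong:
  assumes "\<forall>i<n. x i = y i" "\<forall>i<n. \<forall>j<n. A i j = B i j"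
  shows "qform n A x = qform n B y"
  unfolding qform_def using assms by (auto intro!: sum.cong)

lemma qform_Suc_upd_zero: "qform (Suc n) A (x(n := 0)) = qform n A x"
proof -
  have "qform (Suc n) A (x(n := 0)) = qform n A (x(n := 0))"
    unfolding qform_def by simp
  also have "\<dots> = qform n A x" by (rule qform_cong) auto
  finally show ?thesis .
qed

lemma psd_Suc_imp_psd: "psd (Suc n) P \<Longrightarrow> psd n P"
  unfolding psd_def symm_def by (metis less_SucI qform_Suc_upd_zero)

lemma nonneg_Suc_imp_nonneg: "nonneg (Suc n) N \<Longrightarrow> nonneg n N"
  unfolding nonneg_def symm_def by auto

lemma cop_Suc_imp_cop: "cop (Suc n) A \<Longrightarrow> cop n A"
  unfolding cop_def symm_def
  by (metis less_SucI fun_upd_apply less_Suc_eq qform_Suc_upd_zero order_refl)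

lemma spn_Suc_imp_spn: "spn (Suc n) A \<Longrightarrow> spn n A"
  unfolding spn_def by (meson less_SucI psd_Suc_imp_psd nonneg_Suc_imp_nonneg)

definition merge_last :: "nat \<Rightarrow> (nat \<Rightarrow> real) \<Rightarrow> nat \<Rightarrow> real" where
  "merge_last n x = x(n - 1 := x (n - 1) + x n)"

lemma lift_eq: "i < n \<Longrightarrow> j < n \<Longrightarrow> lift n Q i j = Q i j"
  unfolding lift_def by simp

lemma sum_Suc_Suc_min:
  "(\<Sum>j<Suc (Suc k). f (min j k) * x j) = (\<Sum>j<Suc k. f j * merge_last (Suc k) x j)"
proof -
  have "(\<Sum>j<k. f (min j k) * x j) = (\<Sum>j<k. f j * merge_last (Suc k) x j)"
    by (rule sum.cong) (auto simp: merge_last_def)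
  then show ?thesis by (simp add: merge_last_def algebra_simps)
qed

lemma qform_lift:
  assumes "0 < n"
  shows "qform (Suc n) (lift n Q) x = qform n Q (merge_last n x)"
proof -
  obtain k where n: "n = Suc k" using assms by (cases n) auto
  let ?y = "merge_last (Suc k) x"
  have "qform (Suc (Suc k)) (lift (Suc k) Q) x
      = (\<Sum>i<Suc (Suc k). (\<Sum>j<Suc (Suc k). Q (min i k) (min j k) * x j) * x i)"
    unfolding qform_def lift_def
    by (simp add: sum_distrib_right sum_distrib_left algebra_simps)
  also have "\<dots> = (\<Sum>i<Suc (Suc k). (\<Sum>j<Suc k. Q (min i k) j * ?y j) * x i)"
    using sum_Suc_Suc_min[of "Q (min _ k)"] by simp
  also have "\<dots> = (\<Sum>i<Suc k. (\<Sum>j<Suc k. Q i j * ?y j) * ?y i)"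
    using sum_Suc_Suc_min[of "\<lambda>a. \<Sum>j<Suc k. Q a j * ?y j" k x] by simp
  also have "\<dots> = qform (Suc k) Q ?y"
    unfolding qform_def sum_distrib_right by (intro sum.cong refl) (simp add: ac_simps)
  finally show ?thesis using n by simp
qed

lemma merge_last_nonneg:
  "(\<forall>i<Suc n. 0 \<le> x i) \<Longrightarrow> i < n \<Longrightarrow> 0 \<le> merge_last n x i"
  unfolding merge_last_def by auto

lemma symm_lift: "symm n Q \<Longrightarrow> symm (Suc n) (lift n Q)"
  unfolding symm_def lift_def by (cases n) (auto simp: min_def less_Suc_eq_le)

lemma qform_lift_block: "qform n (lift n Q) x = qform n Q x"
  by (rule qform_cong) (simp_all add: lift_eq)

lemma symm_lift_block: "symm n (lift n Q) \<longleftrightarrow> symm n Q"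
  unfolding symm_def by (simp add: lift_eq)

lemma psd_lift_iff:
  assumes "0 < n"
  shows "psd (Suc n) (lift n Q) \<longleftrightarrow> psd n Q"
proof
  assume "psd (Suc n) (lift n Q)"
  then have "psd n (lift n Q)" by (rule psd_Suc_imp_psd)
  then show "psd n Q"
    unfolding psd_def by (simp add: qform_lift_block symm_lift_block)
next
  assume "psd n Q"
  then show "psd (Suc n) (lift n Q)"
    unfolding psd_def by (simp add: symm_lift qform_lift[OF assms])
qed

lemma nonneg_lift_iff:
  assumes "0 < n"
  shows "nonneg (Suc n) (lift n Q) \<longleftrightarrow> nonneg n Q"
proof
  assume "nonneg (Suc n) (lift n Q)"
  then have "nonneg n (lift n Q)" by (rule nonneg_Suc_imp_nonneg)
  then show "nonneg n Q"
    unfolding nonneg_def by (simp add: symm_lift_block lift_eq)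
next
  assume "nonneg n Q"
  moreover have "min i (n - 1) < n" for i using assms by simp
  ultimately show "nonneg (Suc n) (lift n Q)"
    unfolding nonneg_def using symm_lift[of n Q] by (simp add: lift_def)
qed

lemma cop_lift_iff:
  assumes "0 < n"
  shows "cop (Suc n) (lift n Q) \<longleftrightarrow> cop n Q"
proof
  assume "cop (Suc n) (lift n Q)"
  then have "cop n (lift n Q)" by (rule cop_Suc_imp_cop)
  then show "cop n Q"
    unfolding cop_def by (simp add: symm_lift_block qform_lift_block)
next
  assume cop: "cop n Q"
  show "cop (Suc n) (lift n Q)" unfolding cop_def
  proof (intro conjI allI impI)
    show "symm (Suc n) (lift n Q)" using cop symm_lift unfolding cop_def by blast
    fix x :: "nat \<Rightarrow> real" assume "\<forall>i<Suc n. 0 \<le> x i"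
    then have "0 \<le> qform n Q (merge_last n x)"
      using cop merge_last_nonneg unfolding cop_def by blast
    then show "0 \<le> qform (Suc n) (lift n Q) x" by (simp add: qform_lift[OF assms])
  qed
qed

lemma spn_lift_iff:
  assumes "0 < n"
  shows "spn (Suc n) (lift n Q) \<longleftrightarrow> spn n Q"
proof
  assume "spn (Suc n) (lift n Q)"
  then have "spn n (lift n Q)" by (rule spn_Suc_imp_spn)
  then show "spn n Q"
    unfolding spn_def by (simp add: lift_eq)
next
  assume "spn n Q"
  then obtain P N where PN: "psd n P" "nonneg n N" "\<forall>i<n. \<forall>j<n. Q i j = P i j + N i j"
    unfolding spn_def by auto
  have "min i (n - 1) < n" for i using assms by simp
  with PN(3) have "\<forall>i<Suc n. \<forall>j<Suc n. lift n Q i j = lift n P i j + lift n N i j"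
    by (simp add: lift_def)
  with PN(1,2) show "spn (Suc n) (lift n Q)"
    unfolding spn_def using psd_lift_iff[OF assms] nonneg_lift_iff[OF assms] by blast
qed

theorem lemma5p5:
  fixes n :: nat and Q :: mat
  assumes "n \<ge> 2" and "symm n Q"
  shows "(spn n Q \<and> \<not> psd n Q \<and> \<not> nonneg n Q \<longrightarrow>
            spn (n+1) (lift n Q) \<and> \<not> psd (n+1) (lift n Q) \<and> \<not> nonneg (n+1) (lift n Q))
       \<and> (cop n Q \<and> \<not> spn n Q \<longrightarrow>
            cop (n+1) (lift n Q) \<and> \<not> spn (n+1) (lift n Q))"
proof -
  have "0 < n" using assms(1) by simp
  then show ?thesis
    by (simp add: psd_lift_iff nonneg_lift_iff spn_lift_iff cop_lift_iff)
qed

end
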